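(* Let $A\in\mathbb{R}^{m\times n}$, $b\in\mathcal{R}(A)$, and let $f:\mathbb{R}^n\to\mathbb{R}$ be $\alpha$-strongly convex. Let $\hat x$ be the unique solution of $\min_{x\in\mathbb{R}^n} f(x)$ subject to $Ax=b$, and assume that the subdifferential mapping $\partial f$ is calm at $\hat x$ and that the collection $\{\partial f(\hat x),\mathcal{R}(A^T)\}$ is linearly regular. Let $I_1,\dots,I_r$ be a (not necessarily disjoint) covering of $\{1,\dots,m\}$, let $A_i$ be the submatrix of rows of $A$ indexed by $I_i$ and $b_i$ the subvector of $b$ indexed by $I_i$, and assign each index $i\in\{1,\dots,r\}$ arbitrarily either to $I_C$ or to $I_Q$. Run the algorithm described in the context with $x_0^*\in\mathcal{R}(A^T)$, $x_0=\nabla f^*(x_0^* )$ and probabilities $p_i>0$. Then the iterates converge in expectation to $\hat x$ at a linear rate: there are constants $q\in(0,1)$ and $c>0$ such that for all $k$ \[ \mathbb{E}\left[D_f^{x_{k+1}^*}(x_{k+1},\hat x)\right] \le q\cdot \mathbb{E}\left[D_f^{x_k^*}(x_k,\hat x)\right] \quad\text{and}\quad \mathbb{E}\left[\|x_k-\hat x\|_2\right]\le c\cdot q^{k/2}. \]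
   Context: $f$ is $\alpha$-strongly convex ($\alpha>0$) if $f(y)\ge f(x)+\langle x^*,y-x\rangle+\frac{\alpha}{2}\|y-x\|_2^2$ for all $x,y$, $x^*\in\partial f(x)$; its conjugate $f^*(x^* )=\sup_x\langle x^*,x\rangle-f(x)$ is then differentiable with Lipschitz gradient. Bregman distance: $D_f^{x^*}(x,y)=f(y)-f(x)-\langle x^*,y-x\rangle$. $\mathcal{R}(\cdot)$ is the range. A set-valued map $S:\mathbb{R}^n\rightrightarrows\mathbb{R}^n$ is calm at $\hat x$ if $S(\hat x)\neq\emptyset$ and there are $\epsilon,L>0$ with $S(x)\subset S(\hat x)+L\|x-\hat x\|_2 B_1$ whenever $\|x-\hat x\|_2\le\epsilon$, where $B_1$ is the closed Euclidean unit ball. Two closed convex sets $D_1,D_2$ with nonempty intersection are linearly regular if there is $\gamma>0$ with $\operatorname{dist}(x,D_1\cap D_2)^2\le\gamma(\operatorname{dist}(x,D_1)^2+\operatorname{dist}(x,D_2)^2)$ for all $x\in\mathbb{R}^n$ (Euclidean distances). Algorithm: for $k=0,1,\dots$ choose $i_k\in\{1,\dots,r\}$ independently with $P(i_k=i)=p_i$ ($\sum p_i=1$); write $i=i_k$. If $i\in I_C$: let $\hat w$ be a minimizer of $w\mapsto f^*(x_k^*-A_i^Tw)+\langle w,b_i\rangle$ and set $x_{k+1}^*=x_k^*-A_i^T\hat w$, $x_{k+1}=\nabla f^*(x_{k+1}^* )$ (this $x_{k+1}$ is the Bregman projection of $x_k$ onto $\{x:A_ix=b_i\}$, i.e. the minimizer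 of $D_f^{x_k^*}(x_k,\cdot)$ over that set). If $i\in I_Q$ (with $Q_i=\{b_i\}$): set $w_k=A_ix_k-b_i$, $\beta_k=\langle A_i^Tw_k,x_k\rangle-\|w_k\|_2^2$, let $t_k$ minimize $t\mapsto f^*(x_k^*-tA_i^Tw_k)+t\beta_k$ over $t\in\mathbb{R}$, and set $x_{k+1}^*=x_k^*-t_kA_i^Tw_k$, $x_{k+1}=\nabla f^*(x_{k+1}^* )$ (the Bregman projection of $x_k$ onto the half-space $\{x:\langle A_i^Tw_k,x\rangle\le\beta_k\}$); if $w_k=0$ then $x_{k+1}=x_k$, $x_{k+1}^*=x_k^*$. Expectations are over the random indices. *)

theory Defs
  imports "HOL-Analysis.Analysis"
begin

definition subdiff :: "(real^'n \<Rightarrow> real) \<Rightarrow> real^'n \<Rightarrow> (real^'n) set" where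
  "subdiff f x = {s. \<forall>y. f y \<ge> f x + s \<bullet> (y - x)}"

definition strongly_convex :: "real \<Rightarrow> (real^'n \<Rightarrow> real) \<Rightarrow> bool" where
  "strongly_convex \<alpha> f \<longleftrightarrow> \<alpha> > 0 \<and> convex_on UNIV f \<and>
     (\<forall>x y s. s \<in> subdiff f x \<longrightarrow> f y \<ge> f x + s \<bullet> (y - x) + \<alpha> / 2 * (norm (y - x))\<^sup>2)"

definition conj :: "(real^'n \<Rightarrow> real) \<Rightarrow> real^'n \<Rightarrow> real" where
  "conj f s = (SUP x. s \<bullet> x - f x)"

definition grad_conj :: "(real^'n \<Rightarrow> real) \<Rightarrow> real^'n \<Rightarrow> real^'n" where
  "grad_conj f s = (THE D. GDERIV (conj f) s :> D)"

definition bregman :: "(real^'n \<Rightarrow> real) \<Rightarrow> real^'n \<Rightarrow> real^'n \<Rightarrow> real^'n \<Rightarrow> real" where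
  "bregman f s x y = f y - f x - s \<bullet> (y - x)"

definition calm :: "(real^'n \<Rightarrow> (real^'n) set) \<Rightarrow> real^'n \<Rightarrow> bool" where
  "calm S xh \<longleftrightarrow> S xh \<noteq> {} \<and>
     (\<exists>\<epsilon>>0. \<exists>L>0. \<forall>x. norm (x - xh) \<le> \<epsilon> \<longrightarrow>
        S x \<subseteq> {u + v | u v. u \<in> S xh \<and> v \<in> cball 0 (L * norm (x - xh))})"

definition lin_regular :: "(real^'n) set \<Rightarrow> (real^'n) set \<Rightarrow> bool" where
  "lin_regular D1 D2 \<longleftrightarrow> closed D1 \<and> convex D1 \<and> closed D2 \<and> convex D2 \<and> D1 \<inter> D2 \<noteq> {} \<and>
     (\<exists>\<gamma>>0. \<forall>x. (infdist x (D1 \<inter> D2))\<^sup>2 \<le> \<gamma> * ((infdist x D1)\<^sup>2 + (infdist x D2)\<^sup>2))"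

(* vector in R^m supported on the row index set I: represents a vector in R^{|I|} *)
definition supported_on :: "'m set \<Rightarrow> real^'m \<Rightarrow> bool" where
  "supported_on I w \<longleftrightarrow> (\<forall>j. j \<notin> I \<longrightarrow> w $ j = 0)"

(* Vectors in R^{|I_i|} are represented as vectors of R^m
   supported on I i, so A_i^T w = transpose A *v w, <w,b_i> = w \<bullet> b. *)
definition alg_step ::
  "(real^'n \<Rightarrow> real) \<Rightarrow> real^'n^'m \<Rightarrow> real^'m \<Rightarrow> (nat \<Rightarrow> 'm set) \<Rightarrow> nat set
     \<Rightarrow> nat \<Rightarrow> real^'n \<Rightarrow> real^'n \<Rightarrow> bool" where
  "alg_step f A b I IC i xs xs' \<longleftrightarrow>
    (if i \<in> IC then
       (\<exists>w. supported_on (I i) w \<and>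
          (\<forall>v. supported_on (I i) v \<longrightarrow>
              conj f (xs - transpose A *v w) + w \<bullet> b \<le> conj f (xs - transpose A *v v) + v \<bullet> b) \<and>
          xs' = xs - transpose A *v w)
     else
       (let x = grad_conj f xs;
            w = (\<chi> j. if j \<in> I i then (A *v x - b) $ j else 0);
            \<beta> = (transpose A *v w) \<bullet> x - (norm w)\<^sup>2
        in if w = 0 then xs' = xs
           else (\<exists>t. (\<forall>s. conj f (xs - t *\<^sub>R (transpose A *v w)) + t * \<beta>
                          \<le> conj f (xs - s *\<^sub>R (transpose A *v w)) + s * \<beta>) \<and>
                     xs' = xs - t *\<^sub>R (transpose A *v w))))"

definition idx_lists :: "nat \<Rightarrow> nat \<Rightarrow> nat list set" where
  "idx_lists r k = {\<omega>. length \<omega> = k \<and> set \<omega> \<subseteq> {1..r}}"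

definition expect :: "(nat \<Rightarrow> real) \<Rightarrow> nat \<Rightarrow> nat \<Rightarrow> (nat list \<Rightarrow> real) \<Rightarrow> real" where
  "expect p r k g = (\<Sum>\<omega>\<in>idx_lists r k. (\<Prod>j<k. p (\<omega> ! j)) * g \<omega>)"

end

theory Submission
  imports Defs
begin

text \<open>The algorithm is a descent method for the dual gap
  \<phi>(s) = f^*(s) - \<langle>s, xh\<rangle> + f(xh) = D_f^s(\<nabla>f^*(s), xh). Because \<nabla>f^* is
  (1/\<alpha>)-Lipschitz, each step, which minimizes \<phi> over a set containing a suitable gradient step,
  decreases \<phi> by a fixed multiple of |A_i x - b_i|^2; averaging over the blocks, which cover all
  rows, the expected decrease is a multiple of |A x - b|^2. The iterates stay in R(A^T) and in the
  initial sublevel set of \<phi>, and there calmness of \<partial>f together with linear regularity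
  gives the error bound \<phi>(s) \<le> \<Gamma> |A x - b|^2. Hence E \<phi> contracts by a fixed factor q < 1,
  and |x - xh| \<le> sqrt (2 \<phi> / \<alpha>) yields the rate q^(k/2) for E |x_k - xh|.\<close>

section \<open>Strong convexity and the conjugate\<close>

lemma strongly_convex_pos: "strongly_convex \<alpha> f \<Longrightarrow> \<alpha> > 0"
  by (simp add: strongly_convex_def)

lemma strongly_convex_conj_arg_le:
  assumes sc: "strongly_convex \<alpha> f" and sx: "s \<in> subdiff f x"
  shows "s' \<bullet> y - f y \<le> s' \<bullet> x - f x + (norm (s' - s))\<^sup>2 / (2*\<alpha>)"
proof -
  have a: "\<alpha> > 0" using sc by (rule strongly_convex_pos)
  have growth: "f y \<ge> f x + s \<bullet> (y - x) + \<alpha> / 2 * (norm (y - x))\<^sup>2"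
    using sc sx by (simp add: strongly_convex_def)
  have "(s' - s) \<bullet> (y - x) \<le> norm (s' - s) * norm (y - x)"
    by (rule norm_cauchy_schwarz)
  also have "\<dots> \<le> (norm (s' - s))\<^sup>2 / (2*\<alpha>) + \<alpha> / 2 * (norm (y - x))\<^sup>2"
  proof -
    have "0 \<le> (norm (s' - s) - \<alpha> * norm (y - x))\<^sup>2 / (2*\<alpha>)" using a by simp
    also have "\<dots> = (norm (s' - s))\<^sup>2 / (2*\<alpha>) + \<alpha> / 2 * (norm (y - x))\<^sup>2 - norm (s' - s) * norm (y - x)"
      using a by (simp add: power2_eq_square field_simps)
    finally show ?thesis by simp
  qed
  finally have "(s' - s) \<bullet> (y - x) \<le> (norm (s' - s))\<^sup>2 / (2*\<alpha>) + \<alpha> / 2 * (norm (y - x))\<^sup>2" .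
  moreover have "s' \<bullet> y = s' \<bullet> x + s \<bullet> (y - x) + (s' - s) \<bullet> (y - x)"
    by (simp add: inner_diff_left inner_diff_right)
  ultimately show ?thesis using growth by linarith
qed

lemma conj_le_of_subgradient:
  assumes "strongly_convex \<alpha> f" and "s \<in> subdiff f x"
  shows "conj f s' \<le> s' \<bullet> x - f x + (norm (s' - s))\<^sup>2 / (2*\<alpha>)"
  unfolding conj_def by (rule cSUP_least) (auto simp: strongly_convex_conj_arg_le[OF assms])

lemma conj_ge:
  assumes "strongly_convex \<alpha> f" and "s \<in> subdiff f x"
  shows "conj f s' \<ge> s' \<bullet> x' - f x'"
proof -
  have "bdd_above (range (\<lambda>y. s' \<bullet> y - f y))"
    using strongly_convex_conj_arg_le[OF assms] by (intro bdd_aboveI2) auto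
  then show ?thesis
    unfolding conj_def by (rule cSUP_upper[OF UNIV_I])
qed

lemma conj_eq_of_subgradient:
  assumes "strongly_convex \<alpha> f" and "s \<in> subdiff f x"
  shows "conj f s = s \<bullet> x - f x"
  using conj_le_of_subgradient[OF assms, of s] conj_ge[OF assms, of s x] by simp

lemma has_gderiv_conj:
  assumes sc: "strongly_convex \<alpha> f" and sx: "s \<in> subdiff f x"
  shows "GDERIV (conj f) s :> x"
  unfolding gderiv_def has_derivative_at_alt
proof (intro conjI allI impI)
  have a: "\<alpha> > 0" using sc by (rule strongly_convex_pos)
  show "bounded_linear (\<lambda>h. h \<bullet> x)" by (rule bounded_linear_inner_left)
  fix e :: real assume e: "e > 0"
  \<comment> \<open>conj f is squeezed between its tangent plane at s and a quadratic of curvature 1/\<alpha>\<close>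
  have squeeze: "\<bar>conj f y - conj f s - (y - s) \<bullet> x\<bar> \<le> (norm (y - s))\<^sup>2 / (2*\<alpha>)" for y
    using conj_le_of_subgradient[OF sc sx, of y] conj_ge[OF sc sx, of y x] conj_eq_of_subgradient[OF sc sx] a
    by (simp add: inner_diff_left abs_le_iff)
  show "\<exists>d>0. \<forall>y. norm (y - s) < d \<longrightarrow> norm (conj f y - conj f s - (y - s) \<bullet> x) \<le> e * norm (y - s)"
  proof (intro exI[of _ "2*\<alpha>*e"] conjI allI impI)
    show "0 < 2*\<alpha>*e" using a e by simp
    fix y assume y: "norm (y - s) < 2*\<alpha>*e"
    have "norm (y - s) * norm (y - s) \<le> (2*\<alpha>*e) * norm (y - s)"
      using y by (intro mult_right_mono) auto
    then have "(norm (y - s))\<^sup>2 / (2*\<alpha>) \<le> e * norm (y - s)"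
      using a by (simp add: power2_eq_square divide_le_eq mult.commute mult.left_commute)
    then show "norm (conj f y - conj f s - (y - s) \<bullet> x) \<le> e * norm (y - s)"
      using squeeze[of y] by simp
  qed
qed

lemma grad_conj_eq_of_subgradient:
  assumes "strongly_convex \<alpha> f" and "s \<in> subdiff f x"
  shows "grad_conj f s = x"
  unfolding grad_conj_def
proof (rule the_equality[where P="\<lambda>D. GDERIV (conj f) s :> D", OF has_gderiv_conj[OF assms]])
  fix D assume "GDERIV (conj f) s :> D"
  then have "(\<lambda>h. h \<bullet> D) = (\<lambda>h. h \<bullet> x)"
    using has_gderiv_conj[OF assms] unfolding gderiv_def by (rule has_derivative_unique)
  then have "(D - x) \<bullet> D = (D - x) \<bullet> x" by metis
  then have "(D - x) \<bullet> (D - x) = 0" by (simp add: inner_diff_right)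
  then show "D = x" by simp
qed

text \<open>A minimizer of f - \<langle>s, \<cdot>\<rangle> exists because strong convexity, applied at the given
  subgradient s0, makes this function grow quadratically outside a large ball.\<close>
lemma strongly_convex_subdiff_surj:
  assumes sc: "strongly_convex \<alpha> f" and s0: "s0 \<in> subdiff f z"
  shows "\<exists>x. s \<in> subdiff f x"
proof -
  have a: "\<alpha> > 0" and cv: "convex_on UNIV f" using sc by (auto simp: strongly_convex_def)
  define g where "g y = f y - s \<bullet> y" for y
  have cf: "continuous_on UNIV f" by (rule convex_on_continuous[OF open_UNIV cv])
  have cg: "continuous_on (cball z R) g" for R
    unfolding g_def by (intro continuous_intros continuous_on_subset[OF cf]) auto
  define R where "R = 2 * norm (s0 - s) / \<alpha> + 1"
  have R0: "R \<ge> 0" using a unfolding R_def by simp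
  obtain x where xmin: "\<forall>y\<in>cball z R. g x \<le> g y"
    using continuous_attains_inf[OF compact_cball _ cg, of R] R0 by (auto simp del: mem_cball)
  have gz: "g x \<le> g z" using xmin R0 by simp
  have far: "g z < g y" if "y \<notin> cball z R" for y
  proof -
    define d where "d = norm (y - z)"
    have dR: "d > R" using that unfolding d_def by (simp add: dist_norm norm_minus_commute)
    have growth: "f y \<ge> f z + s0 \<bullet> (y - z) + \<alpha> / 2 * d\<^sup>2"
      using sc s0 unfolding d_def by (simp add: strongly_convex_def)
    have "(s0 - s) \<bullet> (y - z) \<ge> - (norm (s0 - s) * d)"
      unfolding d_def using Cauchy_Schwarz_ineq2[of "s0 - s" "y - z"] by linarith
    then have "g y - g z \<ge> \<alpha> / 2 * d\<^sup>2 - norm (s0 - s) * d"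
      using growth unfolding g_def by (simp add: inner_diff_left algebra_simps)
    moreover have "\<alpha> / 2 * d > norm (s0 - s)"
      using dR a unfolding R_def by (simp add: field_simps)
    then have "\<alpha> / 2 * d\<^sup>2 - norm (s0 - s) * d > 0"
      using dR R0 by (simp add: power2_eq_square algebra_simps)
    ultimately show ?thesis by linarith
  qed
  have "\<forall>y. g x \<le> g y" using xmin far gz by (meson less_le_not_le order_trans linorder_le_cases)
  then have "s \<in> subdiff f x"
    unfolding subdiff_def g_def by (auto simp: algebra_simps)
  then show ?thesis by blast
qed

lemma subgradient_grad_conj:
  assumes sc: "strongly_convex \<alpha> f" and "s0 \<in> subdiff f z"
  shows "s \<in> subdiff f (grad_conj f s)"
proof -
  obtain x where "s \<in> subdiff f x" using strongly_convex_subdiff_surj[OF assms] by blast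
  with grad_conj_eq_of_subgradient[OF sc this] show ?thesis by simp
qed

lemma convex_subdiff_bounded:
  fixes f :: "real^'n \<Rightarrow> real"
  assumes cv: "convex_on UNIV f"
  shows "\<exists>M. \<forall>x s. norm (x - z) \<le> R \<longrightarrow> s \<in> subdiff f x \<longrightarrow> norm s \<le> M"
proof -
  have cf: "continuous_on UNIV f" by (rule convex_on_continuous[OF open_UNIV cv])
  have "compact (f ` cball z (R+1))"
    by (intro compact_continuous_image continuous_on_subset[OF cf]) auto
  then have "bounded (f ` cball z (R+1))" by (rule compact_imp_bounded)
  then obtain M where M: "\<forall>y\<in>cball z (R+1). \<bar>f y\<bar> \<le> M"
    unfolding bounded_iff by auto
  show ?thesis
  proof (intro exI[of _ "2*M"] allI impI)
    fix x s assume xz: "norm (x - z) \<le> R" and sx: "s \<in> subdiff f x"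
    have fx: "\<bar>f x\<bar> \<le> M" using M xz by (auto simp: dist_norm norm_minus_commute)
    show "norm s \<le> 2*M"
    proof (cases "s = 0")
      case True
      then show ?thesis using fx by simp
    next
      case False
      define y where "y = x + (1 / norm s) *\<^sub>R s"
      have "norm (y - z) \<le> norm (x - z) + 1"
        unfolding y_def using norm_triangle_ineq[of "x - z" "(1 / norm s) *\<^sub>R s"] False
        by (simp add: algebra_simps)
      then have fy: "\<bar>f y\<bar> \<le> M" using M xz by (auto simp: dist_norm norm_minus_commute)
      have "f y \<ge> f x + s \<bullet> (y - x)" using sx unfolding subdiff_def by blast
      moreover have "s \<bullet> (y - x) = norm s"
        unfolding y_def using False by (simp add: power2_norm_eq_inner[symmetric] power2_eq_square)
      ultimately show ?thesis using fx fy by linarith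
    qed
  qed
qed

section \<open>The row space of A\<close>

lemma transpose_mult_inner: "(transpose A *v y) \<bullet> v = y \<bullet> ((A::real^'n^'m) *v v)"
  by (simp add: dot_lmul_matrix)

lemma subspace_range_transpose: "subspace (range (\<lambda>y. transpose (A::real^'n^'m) *v y))"
  by (rule linear_subspace_image[OF matrix_vector_mul_linear subspace_UNIV])

text \<open>A is injective, hence bounded below, on its row space, and the row space is orthogonal
  to the kernel of A.\<close>
lemma range_transpose_inner_le:
  fixes A :: "real^'n^'m"
  shows "\<exists>\<kappa>>0. \<forall>z\<in>range (\<lambda>y. transpose A *v y). \<forall>v. \<bar>z \<bullet> v\<bar> \<le> \<kappa> * norm z * norm (A *v v)"
proof -
  let ?S = "range (\<lambda>y. transpose A *v y)"
  have ss: "subspace ?S" by (rule subspace_range_transpose)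
  have inj: "\<forall>z\<in>?S. A *v z = 0 \<longrightarrow> z = 0"
  proof (intro ballI impI)
    fix z assume "z \<in> ?S" "A *v z = 0"
    then obtain y where y: "z = transpose A *v y" by auto
    have "z \<bullet> z = y \<bullet> (A *v z)" using transpose_mult_inner[of A y z] y by simp
    then show "z = 0" using \<open>A *v z = 0\<close> by simp
  qed
  have bl: "bounded_linear (\<lambda>x. A *v x)" using matrix_vector_mul_linear linear_linear by blast
  obtain e where e: "e > 0" "\<forall>z\<in>?S. norm (A *v z) \<ge> e * norm z"
    using injective_imp_isometric[OF closed_subspace[OF ss] ss bl inj] by blast
  show ?thesis
  proof (intro exI[of _ "1/e"] conjI ballI allI)
    show "0 < 1/e" using e by simp
    fix z v assume z: "z \<in> ?S"
    obtain u w where u: "u \<in> span ?S" and w: "\<And>t. t \<in> span ?S \<Longrightarrow> orthogonal w t"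
      and vuw: "v = u + w"
      using orthogonal_subspace_decomp_exists[of ?S v] by metis
    have uS: "u \<in> ?S" using u ss span_eq_iff by blast
    have zw: "z \<bullet> w = 0" using w[of z] z span_base[of z ?S] by (simp add: orthogonal_def inner_commute)
    have Aw: "A *v w = 0"
    proof -
      have "transpose A *v (A *v w) \<in> span ?S" by (intro span_base) auto
      then have "w \<bullet> (transpose A *v (A *v w)) = 0" using w by (simp add: orthogonal_def)
      then have "(A *v w) \<bullet> (A *v w) = 0"
        using transpose_mult_inner[of A "A *v w" w] by (simp add: inner_commute)
      then show ?thesis by simp
    qed
    have "\<bar>z \<bullet> v\<bar> = \<bar>z \<bullet> u\<bar>" using zw vuw by (simp add: inner_add_right)
    also have "\<dots> \<le> norm z * norm u" by (rule Cauchy_Schwarz_ineq2)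
    also have "\<dots> \<le> norm z * (norm (A *v u) / e)"
      using e uS by (intro mult_left_mono) (auto simp: field_simps)
    also have "A *v u = A *v v" using Aw vuw by (simp add: matrix_vector_right_distrib)
    finally show "\<bar>z \<bullet> v\<bar> \<le> 1 / e * norm z * norm (A *v v)" by simp
  qed
qed

section \<open>The dual gap and one step of the algorithm\<close>

text \<open>For s' = s - A^T v the dual gap is conj f (s - A^T v) + \<langle>v, b\<rangle> up to a constant
  (lemma dual_gap_diff_transpose): this is the function both kinds of steps minimize.\<close>
definition dual_gap :: "(real^'n \<Rightarrow> real) \<Rightarrow> real^'n \<Rightarrow> real^'n \<Rightarrow> real" where
  "dual_gap f xh s = conj f s - s \<bullet> xh + f xh"

lemma dual_gap_eq_bregman:
  assumes "strongly_convex \<alpha> f" and "s \<in> subdiff f x"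
  shows "dual_gap f xh s = bregman f s x xh"
  using conj_eq_of_subgradient[OF assms]
  unfolding dual_gap_def bregman_def by (simp add: inner_diff_right)

lemma dual_gap_ge:
  assumes sc: "strongly_convex \<alpha> f" and sx: "s \<in> subdiff f x"
  shows "\<alpha> / 2 * (norm (x - xh))\<^sup>2 \<le> dual_gap f xh s"
proof -
  have "f xh \<ge> f x + s \<bullet> (xh - x) + \<alpha> / 2 * (norm (xh - x))\<^sup>2"
    using sc sx unfolding strongly_convex_def by blast
  then show ?thesis
    unfolding dual_gap_eq_bregman[OF sc sx] bregman_def by (simp add: norm_minus_commute)
qed

lemma dual_gap_diff_le:
  assumes sc: "strongly_convex \<alpha> f" and sx: "s \<in> subdiff f x"
  shows "dual_gap f xh (s - h) \<le> dual_gap f xh s - h \<bullet> (x - xh) + (norm h)\<^sup>2 / (2*\<alpha>)"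
  using conj_le_of_subgradient[OF sc sx, of "s - h"] conj_eq_of_subgradient[OF sc sx]
  unfolding dual_gap_def by (simp add: inner_diff_left inner_diff_right)

lemma dual_gap_diff_transpose:
  assumes "A *v xh = b"
  shows "dual_gap f xh (s - transpose A *v v) = conj f (s - transpose A *v v) + v \<bullet> b + (f xh - s \<bullet> xh)"
  unfolding dual_gap_def using transpose_mult_inner[of A v xh] assms by (simp add: inner_diff_left)

text \<open>The vector A_i x - b_i, padded with zeros outside the block J = I_i.\<close>
definition block_residual :: "real^'n^'m \<Rightarrow> real^'m \<Rightarrow> 'm set \<Rightarrow> real^'n \<Rightarrow> real^'m" where
  "block_residual A b J x = (\<chi> j. if j \<in> J then (A *v x - b) $ j else 0)"

lemma block_residual_inner: "block_residual A b J x \<bullet> (A *v x - b) = (norm (block_residual A b J x))\<^sup>2"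
  unfolding power2_norm_eq_inner block_residual_def inner_vec_def by (intro sum.cong) auto

lemma transpose_block_residual_inner:
  assumes "A *v xh = b"
  shows "(transpose A *v block_residual A b J x) \<bullet> (x - xh) = (norm (block_residual A b J x))\<^sup>2"
  using transpose_mult_inner[of A "block_residual A b J x" "x - xh"] block_residual_inner[of A b J x] assms
  by (simp add: matrix_vector_mult_diff_distrib)

lemma alg_step_eq_diff_transpose:
  assumes "alg_step f A b I IC i s s'"
  shows "\<exists>v. s' = s - transpose A *v v"
proof (cases "i \<in> IC")
  case True
  then show ?thesis using assms unfolding alg_step_def by auto
next
  case False
  let ?w = "block_residual A b (I i) (grad_conj f s)"
  have "s' = s \<or> (\<exists>t. s' = s - t *\<^sub>R (transpose A *v ?w))"
    using assms False unfolding alg_step_def Let_def block_residual_def by (auto split: if_splits)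
  then show ?thesis
    by (metis diff_zero matrix_vector_mult_0_right matrix_vector_mult_scaleR)
qed

lemma alg_step_le_line:
  fixes A :: "real^'n^'m"
  assumes feas: "A *v xh = b" and st: "alg_step f A b I IC i s s'"
  shows "dual_gap f xh s' \<le> dual_gap f xh (s - t *\<^sub>R (transpose A *v block_residual A b (I i) (grad_conj f s)))"
proof -
  let ?x = "grad_conj f s"
  let ?w = "block_residual A b (I i) ?x"
  have line: "s - u *\<^sub>R (transpose A *v ?w) = s - transpose A *v (u *\<^sub>R ?w)" for u
    by (simp add: matrix_vector_mult_scaleR)
  show ?thesis
  proof (cases "i \<in> IC")
    case True
    then obtain v where opt: "\<forall>u. supported_on (I i) u \<longrightarrow>
              conj f (s - transpose A *v v) + v \<bullet> b \<le> conj f (s - transpose A *v u) + u \<bullet> b"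
      and s': "s' = s - transpose A *v v"
      using st unfolding alg_step_def by auto
    have "supported_on (I i) (t *\<^sub>R ?w)" unfolding supported_on_def block_residual_def by simp
    with opt show ?thesis unfolding s' line dual_gap_diff_transpose[OF feas] by fastforce
  next
    case False
    have gap_line: "dual_gap f xh (s - u *\<^sub>R (transpose A *v ?w))
        = conj f (s - u *\<^sub>R (transpose A *v ?w)) + u * (?w \<bullet> b) + (f xh - s \<bullet> xh)" for u
      unfolding line dual_gap_diff_transpose[OF feas] by simp
    let ?\<beta> = "(transpose A *v ?w) \<bullet> ?x - (norm ?w)\<^sup>2"
    have \<beta>: "?\<beta> = ?w \<bullet> b"
      using transpose_mult_inner[of A ?w ?x] block_residual_inner[of A b "I i" ?x]
      by (simp add: inner_diff_right)
    have "if ?w = 0 then s' = s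
          else (\<exists>t'. (\<forall>u. conj f (s - t' *\<^sub>R (transpose A *v ?w)) + t' * ?\<beta>
                          \<le> conj f (s - u *\<^sub>R (transpose A *v ?w)) + u * ?\<beta>) \<and>
                     s' = s - t' *\<^sub>R (transpose A *v ?w))"
      using st False unfolding alg_step_def Let_def block_residual_def by simp
    then consider "?w = 0" "s' = s"
      | t' where "\<forall>u. conj f (s - t' *\<^sub>R (transpose A *v ?w)) + t' * ?\<beta>
                          \<le> conj f (s - u *\<^sub>R (transpose A *v ?w)) + u * ?\<beta>"
          and "s' = s - t' *\<^sub>R (transpose A *v ?w)"
      by (auto split: if_splits)
    then show ?thesis
    proof cases
      case 1
      then show ?thesis by simp
    next
      case (2 t')
      have "conj f (s - t' *\<^sub>R (transpose A *v ?w)) + t' * (?w \<bullet> b)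
          \<le> conj f (s - t *\<^sub>R (transpose A *v ?w)) + t * (?w \<bullet> b)"
        using 2(1) unfolding \<beta> by blast
      then show ?thesis unfolding 2(2) gap_line by simp
    qed
  qed
qed

text \<open>Comparing with the gradient step of length \<alpha> / K^2, where K bounds the norm of A^T.\<close>
lemma alg_step_decrease:
  fixes A :: "real^'n^'m"
  assumes sc: "strongly_convex \<alpha> f" and s0: "s0 \<in> subdiff f z" and feas: "A *v xh = b"
    and K: "K > 0" "\<And>v. norm (transpose A *v v) \<le> K * norm v"
    and st: "alg_step f A b I IC i s s'"
  shows "dual_gap f xh s' \<le> dual_gap f xh s
           - \<alpha> / (2*K\<^sup>2) * (norm (block_residual A b (I i) (grad_conj f s)))\<^sup>2"
proof -
  have a: "\<alpha> > 0" using sc by (rule strongly_convex_pos)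
  let ?x = "grad_conj f s"
  let ?w = "block_residual A b (I i) ?x"
  define \<tau> where "\<tau> = \<alpha> / K\<^sup>2"
  have sx: "s \<in> subdiff f ?x" by (rule subgradient_grad_conj[OF sc s0])
  have "\<tau> \<ge> 0" unfolding \<tau>_def using a by simp
  have "norm (\<tau> *\<^sub>R (transpose A *v ?w)) \<le> \<tau> * (K * norm ?w)"
    using K(2)[of ?w] mult_left_mono[OF K(2)[of ?w], of \<tau>] \<open>\<tau> \<ge> 0\<close> by simp
  then have "(norm (\<tau> *\<^sub>R (transpose A *v ?w)))\<^sup>2 \<le> (\<tau> * (K * norm ?w))\<^sup>2"
    by (intro power_mono) auto
  then have step_norm: "(norm (\<tau> *\<^sub>R (transpose A *v ?w)))\<^sup>2 / (2*\<alpha>) \<le> (\<tau> * (K * norm ?w))\<^sup>2 / (2*\<alpha>)"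
    using a by (intro divide_right_mono) auto
  have "dual_gap f xh s' \<le> dual_gap f xh (s - \<tau> *\<^sub>R (transpose A *v ?w))"
    by (rule alg_step_le_line[OF feas st])
  also have "\<dots> \<le> dual_gap f xh s - \<tau> * (norm ?w)\<^sup>2 + (norm (\<tau> *\<^sub>R (transpose A *v ?w)))\<^sup>2 / (2*\<alpha>)"
    using dual_gap_diff_le[OF sc sx, of xh "\<tau> *\<^sub>R (transpose A *v ?w)"]
    unfolding inner_scaleR_left transpose_block_residual_inner[OF feas] .
  also have "\<dots> \<le> dual_gap f xh s - \<tau> * (norm ?w)\<^sup>2 + (\<tau> * (K * norm ?w))\<^sup>2 / (2*\<alpha>)"
    using step_norm by linarith
  also have "\<dots> = dual_gap f xh s - \<alpha> / (2*K\<^sup>2) * (norm ?w)\<^sup>2"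
    unfolding \<tau>_def using a K(1) by (simp add: power2_eq_square field_simps)
  finally show ?thesis .
qed

section \<open>An error bound on sublevel sets of the dual gap\<close>

lemma calm_lin_regular_infdist_le:
  assumes calm: "calm (subdiff f) xh" and linreg: "lin_regular (subdiff f xh) V"
  shows "\<exists>\<epsilon>>0. \<exists>C\<ge>0. \<forall>s x. s \<in> V \<longrightarrow> s \<in> subdiff f x \<longrightarrow> norm (x - xh) \<le> \<epsilon> \<longrightarrow>
           infdist s (subdiff f xh \<inter> V) \<le> C * norm (x - xh)"
proof -
  obtain \<gamma> where \<gamma>: "\<gamma> > 0"
    and lr: "\<forall>s. (infdist s (subdiff f xh \<inter> V))\<^sup>2 \<le> \<gamma> * ((infdist s (subdiff f xh))\<^sup>2 + (infdist s V)\<^sup>2)"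
    using linreg unfolding lin_regular_def by blast
  obtain \<epsilon> L where \<epsilon>: "\<epsilon> > 0" and L: "L > 0" and cm: "\<forall>x. norm (x - xh) \<le> \<epsilon> \<longrightarrow>
        subdiff f x \<subseteq> {u + v | u v. u \<in> subdiff f xh \<and> v \<in> cball 0 (L * norm (x - xh))}"
    using calm unfolding calm_def by blast
  have "infdist s (subdiff f xh \<inter> V) \<le> sqrt \<gamma> * L * norm (x - xh)"
    if sV: "s \<in> V" and sx: "s \<in> subdiff f x" and near: "norm (x - xh) \<le> \<epsilon>" for s x
  proof -
    let ?d = "norm (x - xh)"
    obtain u v where u: "u \<in> subdiff f xh" and v: "v \<in> cball 0 (L * ?d)" and suv: "s = u + v"
      using cm near sx by blast
    have "infdist s (subdiff f xh) \<le> L * ?d"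
      using u v suv by (intro infdist_le2[of u]) (auto simp: dist_norm)
    then have "(infdist s (subdiff f xh))\<^sup>2 \<le> (L * ?d)\<^sup>2"
      using infdist_nonneg by (intro power_mono) auto
    then have "(infdist s (subdiff f xh \<inter> V))\<^sup>2 \<le> \<gamma> * (L * ?d)\<^sup>2"
      using lr[rule_format, of s] sV \<gamma> by (simp add: mult_left_mono order_trans)
    then have "infdist s (subdiff f xh \<inter> V) \<le> sqrt (\<gamma> * (L * ?d)\<^sup>2)" by (simp add: real_le_rsqrt)
    also have "\<dots> = sqrt \<gamma> * L * ?d" using L \<gamma> by (simp add: real_sqrt_mult)
    finally show ?thesis .
  qed
  moreover have "sqrt \<gamma> * L \<ge> 0" using \<gamma> L by simp
  ultimately show ?thesis using \<epsilon> by blast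
qed

text \<open>Near xh this is calmness plus linear regularity; far from xh (but within distance R)
  subgradients are bounded, so any fixed element of the intersection will do.\<close>
lemma subgradient_near_solution_set:
  fixes f :: "real^'n \<Rightarrow> real"
  assumes cv: "convex_on UNIV f" and calm: "calm (subdiff f) xh"
    and linreg: "lin_regular (subdiff f xh) V"
  shows "\<exists>C\<ge>0. \<forall>s x. s \<in> V \<longrightarrow> s \<in> subdiff f x \<longrightarrow> norm (x - xh) \<le> R \<longrightarrow>
           (\<exists>sh\<in>subdiff f xh \<inter> V. norm (s - sh) \<le> C * norm (x - xh))"
proof -
  let ?S = "subdiff f xh \<inter> V"
  have clS: "closed ?S" and neS: "?S \<noteq> {}" using linreg unfolding lin_regular_def by auto
  obtain s0 where s0: "s0 \<in> ?S" using neS by blast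
  obtain \<epsilon> C1 where \<epsilon>: "\<epsilon> > 0" and C1: "C1 \<ge> 0" and near: "\<forall>s x. s \<in> V \<longrightarrow> s \<in> subdiff f x \<longrightarrow>
      norm (x - xh) \<le> \<epsilon> \<longrightarrow> infdist s ?S \<le> C1 * norm (x - xh)"
    using calm_lin_regular_infdist_le[OF calm linreg] by blast
  obtain M where M: "\<forall>x s. norm (x - xh) \<le> R \<longrightarrow> s \<in> subdiff f x \<longrightarrow> norm s \<le> M"
    using convex_subdiff_bounded[OF cv] by blast
  define C where "C = max C1 ((M + norm s0) / \<epsilon>)"
  have "\<exists>sh\<in>?S. norm (s - sh) \<le> C * norm (x - xh)"
    if sV: "s \<in> V" and sx: "s \<in> subdiff f x" and xR: "norm (x - xh) \<le> R" for s x
  proof (cases "norm (x - xh) \<le> \<epsilon>")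
    case True
    obtain sh where sh: "sh \<in> ?S" and "infdist s ?S = dist s sh"
      using infdist_attains_inf[OF clS neS] by blast
    then have "norm (s - sh) = infdist s ?S" by (simp add: dist_norm)
    also have "\<dots> \<le> C1 * norm (x - xh)" using near sV sx True by blast
    also have "\<dots> \<le> C * norm (x - xh)" unfolding C_def by (intro mult_right_mono) auto
    finally show ?thesis using sh by blast
  next
    case False
    have sM: "norm s \<le> M" using M sx xR by blast
    have "norm (s - s0) \<le> M + norm s0" using sM norm_triangle_ineq4[of s s0] by linarith
    also have "\<dots> \<le> (M + norm s0) / \<epsilon> * norm (x - xh)"
    proof -
      have "M + norm s0 \<ge> 0" using sM norm_ge_zero[of s] norm_ge_zero[of s0] by linarith
      then have "(M + norm s0) * \<epsilon> \<le> (M + norm s0) * norm (x - xh)"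
        using False by (intro mult_left_mono) auto
      then show ?thesis using \<epsilon> by (simp add: field_simps)
    qed
    also have "\<dots> \<le> C * norm (x - xh)" unfolding C_def by (intro mult_right_mono) auto
    finally show ?thesis using s0 by blast
  qed
  moreover have "C \<ge> 0" unfolding C_def using C1 by simp
  ultimately show ?thesis by blast
qed

lemma quadratic_growth_le:
  fixes \<alpha> c d \<rho> D :: real
  assumes \<alpha>: "\<alpha> > 0" and growth: "\<alpha> / 2 * d\<^sup>2 \<le> D" and linear: "D \<le> c * d * \<rho>"
  shows "D \<le> 2 * c\<^sup>2 / \<alpha> * \<rho>\<^sup>2"
proof (cases "D = 0")
  case True
  then show ?thesis using \<alpha> by simp
next
  case False
  have "\<alpha> / 2 * d\<^sup>2 \<ge> 0" using \<alpha> by simp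
  then have D: "D > 0" using growth False by linarith
  then have "D * D \<le> (c * d * \<rho>) * (c * d * \<rho>)"
    using mult_mono[OF linear linear] linear by linarith
  also have "\<dots> = (c * d * \<rho>)\<^sup>2" by (simp add: power2_eq_square)
  also have "\<dots> = c\<^sup>2 * \<rho>\<^sup>2 * d\<^sup>2" by (simp add: power_mult_distrib)
  also have "\<dots> \<le> c\<^sup>2 * \<rho>\<^sup>2 * (2 * D / \<alpha>)"
    using growth \<alpha> by (intro mult_left_mono) (auto simp: field_simps)
  also have "\<dots> = (2 * c\<^sup>2 / \<alpha> * \<rho>\<^sup>2) * D" by simp
  finally show ?thesis using D by (simp only: mult_le_cancel_right_pos)
qed

lemma dual_gap_error_bound:
  fixes A :: "real^'n^'m"
  assumes sc: "strongly_convex \<alpha> f" and feas: "A *v xh = b"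
    and calm: "calm (subdiff f) xh"
    and linreg: "lin_regular (subdiff f xh) (range (\<lambda>y. transpose A *v y))"
  shows "\<exists>\<Gamma>>0. \<forall>s\<in>range (\<lambda>y. transpose A *v y). dual_gap f xh s \<le> B \<longrightarrow>
            dual_gap f xh s \<le> \<Gamma> * (norm (A *v grad_conj f s - b))\<^sup>2"
proof -
  let ?R = "range (\<lambda>y. transpose A *v y)"
  have a: "\<alpha> > 0" and cv: "convex_on UNIV f" using sc by (auto simp: strongly_convex_def)
  obtain s0 where s0: "s0 \<in> subdiff f xh" using linreg unfolding lin_regular_def by blast
  define Rr where "Rr = sqrt (2 * max B 0 / \<alpha>)"
  obtain C where C: "C \<ge> 0" and close: "\<forall>s x. s \<in> ?R \<longrightarrow> s \<in> subdiff f x \<longrightarrow> norm (x - xh) \<le> Rr \<longrightarrow>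
           (\<exists>sh\<in>subdiff f xh \<inter> ?R. norm (s - sh) \<le> C * norm (x - xh))"
    using subgradient_near_solution_set[OF cv calm linreg] by blast
  obtain \<kappa> where \<kappa>: "\<kappa> > 0" and inner_le: "\<forall>z\<in>?R. \<forall>v. \<bar>z \<bullet> v\<bar> \<le> \<kappa> * norm z * norm (A *v v)"
    using range_transpose_inner_le[of A] by blast
  define \<Gamma> where "\<Gamma> = 2 * (\<kappa> * C)\<^sup>2 / \<alpha> + 1"
  have "dual_gap f xh s \<le> \<Gamma> * (norm (A *v grad_conj f s - b))\<^sup>2"
    if sR: "s \<in> ?R" and sB: "dual_gap f xh s \<le> B" for s
  proof -
    let ?x = "grad_conj f s"
    let ?D = "dual_gap f xh s"
    let ?d = "norm (?x - xh)"
    let ?\<rho> = "norm (A *v ?x - b)"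
    have sx: "s \<in> subdiff f ?x" by (rule subgradient_grad_conj[OF sc s0])
    have growth: "\<alpha> / 2 * ?d\<^sup>2 \<le> ?D" by (rule dual_gap_ge[OF sc sx])
    then have "?d\<^sup>2 \<le> 2 * max B 0 / \<alpha>" using sB a by (simp add: field_simps)
    then have "?d \<le> Rr" unfolding Rr_def by (simp add: real_le_rsqrt)
    then obtain sh where sh: "sh \<in> subdiff f xh" "sh \<in> ?R" and shd: "norm (s - sh) \<le> C * ?d"
      using close sR sx by blast
    have "f ?x \<ge> f xh + sh \<bullet> (?x - xh)" using sh unfolding subdiff_def by blast
    then have "?D \<le> (sh - s) \<bullet> (xh - ?x)"
      unfolding dual_gap_eq_bregman[OF sc sx] bregman_def by (simp add: inner_diff_left inner_diff_right)
    also have "\<dots> \<le> \<kappa> * norm (sh - s) * norm (A *v (xh - ?x))"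
      using inner_le subspace_diff[OF subspace_range_transpose sh(2) sR] by (meson abs_ge_self order_trans)
    also have "norm (A *v (xh - ?x)) = ?\<rho>"
      using feas by (simp add: matrix_vector_mult_diff_distrib norm_minus_commute)
    also have "\<kappa> * norm (sh - s) * ?\<rho> \<le> \<kappa> * (C * ?d) * ?\<rho>"
      using \<kappa> shd by (intro mult_right_mono mult_left_mono) (auto simp: norm_minus_commute)
    finally have "?D \<le> (\<kappa> * C) * ?d * ?\<rho>" by (simp add: ac_simps)
    then have "?D \<le> 2 * (\<kappa> * C)\<^sup>2 / \<alpha> * ?\<rho>\<^sup>2" by (rule quadratic_growth_le[OF a growth])
    also have "\<dots> \<le> \<Gamma> * ?\<rho>\<^sup>2" unfolding \<Gamma>_def by (simp add: distrib_right)
    finally show ?thesis .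
  qed
  moreover have "\<Gamma> > 0" unfolding \<Gamma>_def using a by (simp add: add_nonneg_pos)
  ultimately show ?thesis by blast
qed

section \<open>Expectations over index sequences\<close>

lemma idx_lists_0: "idx_lists r 0 = {[]}"
  unfolding idx_lists_def by auto

lemma idx_lists_Suc: "idx_lists r (Suc k) = (\<lambda>(\<omega>, i). \<omega> @ [i]) ` (idx_lists r k \<times> {1..r})"
proof (intro set_eqI iffI)
  fix xs assume "xs \<in> idx_lists r (Suc k)"
  then have l: "length xs = Suc k" and st: "set xs \<subseteq> {1..r}" unfolding idx_lists_def by auto
  then obtain ys y where xs: "xs = ys @ [y]" by (metis length_Suc_conv_rev)
  then have "ys \<in> idx_lists r k" "y \<in> {1..r}" using l st unfolding idx_lists_def by auto
  then show "xs \<in> (\<lambda>(\<omega>, i). \<omega> @ [i]) ` (idx_lists r k \<times> {1..r})" using xs by force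
qed (auto simp: idx_lists_def)

lemma expect_0: "expect p r 0 g = g []"
  unfolding expect_def idx_lists_0 by simp

lemma expect_Suc:
  "expect p r (Suc k) g = (\<Sum>\<omega>\<in>idx_lists r k. (\<Prod>j<k. p (\<omega> ! j)) * (\<Sum>i=1..r. p i * g (\<omega> @ [i])))"
proof -
  have inj: "inj_on (\<lambda>(\<omega>, i). \<omega> @ [i]) (idx_lists r k \<times> {1..r})"
    by (auto simp: inj_on_def)
  have prod_snoc: "(\<Prod>j<k. p ((\<omega> @ [i]) ! j)) = (\<Prod>j<k. p (\<omega> ! j))"
    if "\<omega> \<in> idx_lists r k" for \<omega> i
    using that by (intro prod.cong) (auto simp: idx_lists_def nth_append)
  have "expect p r (Suc k) g
      = (\<Sum>(\<omega>, i)\<in>idx_lists r k \<times> {1..r}. (\<Prod>j<Suc k. p ((\<omega> @ [i]) ! j)) * g (\<omega> @ [i]))"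
    unfolding expect_def idx_lists_Suc sum.reindex[OF inj] by (simp add: case_prod_beta)
  also have "\<dots> = (\<Sum>(\<omega>, i)\<in>idx_lists r k \<times> {1..r}. (\<Prod>j<k. p (\<omega> ! j)) * (p i * g (\<omega> @ [i])))"
    by (intro sum.cong refl) (auto simp: prod_snoc idx_lists_def nth_append)
  also have "\<dots> = (\<Sum>\<omega>\<in>idx_lists r k. (\<Prod>j<k. p (\<omega> ! j)) * (\<Sum>i=1..r. p i * g (\<omega> @ [i])))"
    by (simp add: sum.cartesian_product[symmetric] sum_distrib_left)
  finally show ?thesis .
qed

lemma expect_weight_nonneg:
  fixes p :: "nat \<Rightarrow> real"
  assumes "\<forall>i\<in>{1..r}. 0 \<le> p i" and "\<omega> \<in> idx_lists r k"
  shows "0 \<le> (\<Prod>j<k. p (\<omega> ! j))"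
proof (rule prod_nonneg)
  fix j assume "j \<in> {..<k}"
  then have "j < length \<omega>" "set \<omega> \<subseteq> {1..r}" using assms(2) unfolding idx_lists_def by auto
  then have "\<omega> ! j \<in> {1..r}" using nth_mem by blast
  then show "0 \<le> p (\<omega> ! j)" using assms(1) by blast
qed

lemma expect_mono:
  assumes "\<forall>i\<in>{1..r}. 0 \<le> p i" and "\<And>\<omega>. \<omega> \<in> idx_lists r k \<Longrightarrow> g \<omega> \<le> h \<omega>"
  shows "expect p r k g \<le> expect p r k h"
  unfolding expect_def using assms expect_weight_nonneg[OF assms(1)]
  by (intro sum_mono mult_left_mono) auto

lemma expect_const:
  assumes "(\<Sum>i=1..r. p i) = 1"
  shows "expect p r k (\<lambda>_. c) = c"
proof (induction k)
  case 0
  show ?case by (simp add: expect_0)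
next
  case (Suc k)
  then show ?case
    unfolding expect_Suc using assms by (simp add: expect_def sum_distrib_right[symmetric])
qed

lemma expect_affine:
  assumes "(\<Sum>i=1..r. p i) = 1"
  shows "expect p r k (\<lambda>\<omega>. a * g \<omega> + c) = a * expect p r k g + c"
proof -
  have "expect p r k (\<lambda>\<omega>. a * g \<omega> + c) = a * expect p r k g + expect p r k (\<lambda>_. c)"
    unfolding expect_def by (simp add: sum.distrib sum_distrib_left algebra_simps)
  then show ?thesis using expect_const[OF assms] by simp
qed

lemma expect_Suc_le:
  assumes p: "\<forall>i\<in>{1..r}. 0 \<le> p i"
    and step: "\<forall>\<omega>. set \<omega> \<subseteq> {1..r} \<longrightarrow> (\<Sum>i=1..r. p i * g (\<omega> @ [i])) \<le> q * g \<omega>"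
  shows "expect p r (Suc k) g \<le> q * expect p r k g"
proof -
  have "expect p r (Suc k) g \<le> (\<Sum>\<omega>\<in>idx_lists r k. (\<Prod>j<k. p (\<omega> ! j)) * (q * g \<omega>))"
    unfolding expect_Suc using step expect_weight_nonneg[OF p]
    by (intro sum_mono mult_left_mono) (auto simp: idx_lists_def)
  also have "\<dots> = q * expect p r k g"
    unfolding expect_def by (simp add: sum_distrib_left mult.left_commute)
  finally show ?thesis .
qed

lemma expect_le_geometric:
  assumes p: "\<forall>i\<in>{1..r}. 0 \<le> p i" and q: "q \<ge> 0"
    and step: "\<forall>\<omega>. set \<omega> \<subseteq> {1..r} \<longrightarrow> (\<Sum>i=1..r. p i * g (\<omega> @ [i])) \<le> q * g \<omega>"
  shows "expect p r k g \<le> q ^ k * g []"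
proof (induction k)
  case 0
  show ?case by (simp add: expect_0)
next
  case (Suc k)
  have "expect p r (Suc k) g \<le> q * expect p r k g" by (rule expect_Suc_le[OF p step])
  also have "\<dots> \<le> q * (q ^ k * g [])" using Suc q by (intro mult_left_mono)
  finally show ?case by simp
qed

lemma le_div_add_half:
  fixes \<alpha> t u D :: real
  assumes "\<alpha> > 0" "t > 0" "\<alpha> / 2 * u\<^sup>2 \<le> D"
  shows "u \<le> D / (\<alpha> * t) + t / 2"
proof -
  have "2 * t * u \<le> u\<^sup>2 + t\<^sup>2"
    using sum_squares_bound[of u t] by (simp add: power2_eq_square algebra_simps)
  also have "\<dots> \<le> 2 * D / \<alpha> + t\<^sup>2" using assms by (simp add: field_simps)
  finally show ?thesis using assms by (simp add: field_simps power2_eq_square)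
qed

text \<open>The pointwise bound u \<le> g / (\<alpha> t) + t / 2 with t = q^(k/2) balances both terms.\<close>
lemma expect_le_powr_half:
  assumes p: "\<forall>i\<in>{1..r}. 0 \<le> p i" and p_sum: "(\<Sum>i=1..r. p i) = 1"
    and \<alpha>: "\<alpha> > 0" and q: "q > 0"
    and growth: "\<forall>\<omega>. \<alpha> / 2 * (u \<omega>)\<^sup>2 \<le> g \<omega>" and geom: "expect p r k g \<le> q ^ k * B"
  shows "expect p r k u \<le> (B / \<alpha> + 1/2) * q powr (real k / 2)"
proof -
  define t where "t = q powr (real k / 2)"
  have t: "t > 0" unfolding t_def using q by simp
  have tt: "t * t = q ^ k"
    unfolding t_def using q by (simp add: powr_add[symmetric] powr_realpow)
  have "expect p r k u \<le> expect p r k (\<lambda>\<omega>. 1 / (\<alpha> * t) * g \<omega> + t / 2)"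
    using le_div_add_half[OF \<alpha> t] growth by (intro expect_mono[OF p]) simp
  also have "\<dots> = 1 / (\<alpha> * t) * expect p r k g + t / 2"
    by (rule expect_affine[OF p_sum])
  also have "\<dots> \<le> 1 / (\<alpha> * t) * (q ^ k * B) + t / 2"
    using geom t \<alpha> by (intro add_right_mono mult_left_mono) auto
  also have "\<dots> = (B / \<alpha> + 1/2) * t"
    unfolding tt[symmetric] using t \<alpha> by (simp add: field_simps)
  finally show ?thesis unfolding t_def .
qed

section \<open>Linear convergence\<close>

lemma norm_le_sum_block_residual:
  fixes I :: "nat \<Rightarrow> 'm::finite set"
  assumes cover: "(\<Union>i\<in>{1..r}. I i) = UNIV"
  shows "(norm (A *v x - b))\<^sup>2 \<le> (\<Sum>i=1..r. (norm (block_residual A b (I i) x))\<^sup>2)"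
proof -
  let ?v = "A *v x - b"
  have block: "(norm (block_residual A b (I i) x))\<^sup>2 = (\<Sum>j\<in>UNIV. if j \<in> I i then (?v $ j)\<^sup>2 else 0)" for i
    unfolding power2_norm_eq_inner inner_vec_def block_residual_def
    by (intro sum.cong) (auto simp: power2_eq_square)
  have "(norm ?v)\<^sup>2 = (\<Sum>j\<in>UNIV. (?v $ j)\<^sup>2)"
    unfolding power2_norm_eq_inner inner_vec_def by (simp add: power2_eq_square)
  also have "\<dots> \<le> (\<Sum>j\<in>UNIV. \<Sum>i=1..r. if j \<in> I i then (?v $ j)\<^sup>2 else 0)"
  proof (intro sum_mono)
    fix j
    obtain i where i: "i \<in> {1..r}" "j \<in> I i" using cover by blast
    then have "(?v $ j)\<^sup>2 = (if j \<in> I i then (?v $ j)\<^sup>2 else 0)" by simp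
    also have "\<dots> \<le> (\<Sum>i=1..r. if j \<in> I i then (?v $ j)\<^sup>2 else 0)"
      by (rule member_le_sum[OF i(1)]) auto
    finally show "(?v $ j)\<^sup>2 \<le> (\<Sum>i=1..r. if j \<in> I i then (?v $ j)\<^sup>2 else 0)" .
  qed
  also have "\<dots> = (\<Sum>i=1..r. (norm (block_residual A b (I i) x))\<^sup>2)"
    unfolding block by (rule sum.swap)
  finally show ?thesis .
qed

lemma mean_decrease_le:
  fixes p \<phi>' w :: "nat \<Rightarrow> real"
  assumes pm: "pm > 0" "\<forall>i\<in>{1..r}. pm \<le> p i" and p_sum: "(\<Sum>i=1..r. p i) = 1"
    and dec: "\<forall>i\<in>{1..r}. \<phi>' i \<le> \<phi> - c * w i" and w: "\<forall>i\<in>{1..r}. 0 \<le> w i"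
    and c: "c > 0" and \<Gamma>: "\<Gamma> > 0" and \<rho>: "0 \<le> \<rho>" "\<rho> \<le> (\<Sum>i=1..r. w i)"
    and error_bound: "\<phi> \<le> \<Gamma> * \<rho>"
  shows "(\<Sum>i=1..r. p i * \<phi>' i) \<le> \<Gamma> / (\<Gamma> + c * pm) * \<phi>"
proof -
  have p: "\<forall>i\<in>{1..r}. 0 \<le> p i" using pm by (meson less_le_trans less_imp_le)
  have "(\<Sum>i=1..r. p i * \<phi>' i) \<le> (\<Sum>i=1..r. p i * (\<phi> - c * w i))"
    using dec p by (intro sum_mono mult_left_mono) auto
  also have "\<dots> = (\<Sum>i=1..r. p i) * \<phi> - c * (\<Sum>i=1..r. p i * w i)"
    by (simp add: sum_subtractf sum_distrib_left sum_distrib_right algebra_simps)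
  also have "\<dots> \<le> \<phi> - c * (pm * \<rho>)"
  proof -
    have "pm * \<rho> \<le> (\<Sum>i=1..r. pm * w i)"
      using \<rho> pm by (simp add: sum_distrib_left[symmetric])
    also have "\<dots> \<le> (\<Sum>i=1..r. p i * w i)"
      using pm w by (intro sum_mono mult_right_mono) auto
    finally show ?thesis using p_sum c by simp
  qed
  also have "\<dots> \<le> \<Gamma> / (\<Gamma> + c * pm) * \<phi>"
  proof -
    have G: "\<Gamma> + c * pm > 0" using \<Gamma> c pm by (intro add_pos_pos mult_pos_pos)
    have "c * pm * \<rho> \<ge> 0" using \<rho> c pm by simp
    then have "\<phi> \<le> (\<Gamma> + c * pm) * \<rho>"
      using error_bound by (simp add: distrib_right)
    then have "\<phi> / (\<Gamma> + c * pm) \<le> \<rho>" using G by (simp add: divide_le_eq mult.commute)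
    then have "c * pm * (\<phi> / (\<Gamma> + c * pm)) \<le> c * pm * \<rho>"
      using c pm by (intro mult_left_mono) auto
    moreover have "\<Gamma> / (\<Gamma> + c * pm) * \<phi> = \<phi> - c * pm * (\<phi> / (\<Gamma> + c * pm))"
      using G by (simp add: field_simps)
    ultimately show ?thesis by simp
  qed
  finally show ?thesis .
qed

lemma alg_step_expected_contraction:
  fixes A :: "real^'n^'m"
  assumes sc: "strongly_convex \<alpha> f" and feas: "A *v xh = b"
    and calm: "calm (subdiff f) xh"
    and linreg: "lin_regular (subdiff f xh) (range (\<lambda>y. transpose A *v y))"
    and cover: "(\<Union>i\<in>{1..r}. I i) = UNIV"
    and p_pos: "\<forall>i\<in>{1..r}. p i > 0" and p_sum: "(\<Sum>i=1..r. p i) = 1"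
  shows "\<exists>q. 0 < q \<and> q < 1 \<and>
           (\<forall>s s'. s \<in> range (\<lambda>y. transpose A *v y) \<longrightarrow> dual_gap f xh s \<le> B \<longrightarrow>
              (\<forall>i\<in>{1..r}. alg_step f A b I IC i s (s' i)) \<longrightarrow>
              (\<Sum>i=1..r. p i * dual_gap f xh (s' i)) \<le> q * dual_gap f xh s)"
proof -
  have a: "\<alpha> > 0" using sc by (rule strongly_convex_pos)
  obtain s0 where s0: "s0 \<in> subdiff f xh" using linreg unfolding lin_regular_def by blast
  obtain \<Gamma> where \<Gamma>: "\<Gamma> > 0" and error_bound: "\<forall>s\<in>range (\<lambda>y. transpose A *v y).
      dual_gap f xh s \<le> B \<longrightarrow> dual_gap f xh s \<le> \<Gamma> * (norm (A *v grad_conj f s - b))\<^sup>2"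
    using dual_gap_error_bound[OF sc feas calm linreg] by blast
  obtain K where K: "K > 0" "\<And>v. norm (transpose A *v v) \<le> K * norm v"
    using linear_bounded_pos[OF matrix_vector_mul_linear[of "transpose A"]] by blast
  define c where "c = \<alpha> / (2*K\<^sup>2)"
  have c: "c > 0" unfolding c_def using a K by simp
  have "{1..r} \<noteq> {}" using cover by auto
  then have "finite (p ` {1..r})" "p ` {1..r} \<noteq> {}" by auto
  define pm where "pm = Min (p ` {1..r})"
  have pm: "pm > 0" "\<forall>i\<in>{1..r}. pm \<le> p i"
    unfolding pm_def using p_pos \<open>{1..r} \<noteq> {}\<close> by (auto simp: Min_gr_iff)
  define q where "q = \<Gamma> / (\<Gamma> + c * pm)"
  have "c * pm > 0" using c pm by simp
  then have "0 < q" "q < 1" unfolding q_def using \<Gamma> by (auto simp: divide_less_eq)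
  moreover have "(\<Sum>i=1..r. p i * dual_gap f xh (s' i)) \<le> q * dual_gap f xh s"
    if sR: "s \<in> range (\<lambda>y. transpose A *v y)" and sB: "dual_gap f xh s \<le> B"
      and st: "\<forall>i\<in>{1..r}. alg_step f A b I IC i s (s' i)" for s s'
    unfolding q_def
  proof (rule mean_decrease_le[OF pm p_sum _ _ c \<Gamma>])
    show "\<forall>i\<in>{1..r}. dual_gap f xh (s' i)
        \<le> dual_gap f xh s - c * (norm (block_residual A b (I i) (grad_conj f s)))\<^sup>2"
      using alg_step_decrease[OF sc s0 feas K] st unfolding c_def by blast
    show "(norm (A *v grad_conj f s - b))\<^sup>2 \<le> (\<Sum>i=1..r. (norm (block_residual A b (I i) (grad_conj f s)))\<^sup>2)"
      by (rule norm_le_sum_block_residual[OF cover])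
    show "dual_gap f xh s \<le> \<Gamma> * (norm (A *v grad_conj f s - b))\<^sup>2"
      using error_bound sR sB by blast
  qed auto
  ultimately show ?thesis by blast
qed

lemma alg_iterates_invariant:
  fixes A :: "real^'n^'m" and X :: "nat list \<Rightarrow> real^'n"
  assumes feas: "A *v xh = b" and X0: "X [] \<in> range (\<lambda>y. transpose A *v y)"
    and X_step: "\<forall>\<omega> i. set \<omega> \<subseteq> {1..r} \<longrightarrow> i \<in> {1..r} \<longrightarrow>
                    alg_step f A b I IC i (X \<omega>) (X (\<omega> @ [i]))"
  shows "set \<omega> \<subseteq> {1..r} \<Longrightarrow>
           X \<omega> \<in> range (\<lambda>y. transpose A *v y) \<and> dual_gap f xh (X \<omega>) \<le> dual_gap f xh (X [])"
proof (induction \<omega> rule: rev_induct)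
  case Nil
  then show ?case using X0 by simp
next
  case (snoc i \<omega>)
  then have st: "alg_step f A b I IC i (X \<omega>) (X (\<omega> @ [i]))" using X_step by simp
  obtain v where v: "X (\<omega> @ [i]) = X \<omega> - transpose A *v v"
    using alg_step_eq_diff_transpose[OF st] by blast
  have "X \<omega> \<in> range (\<lambda>y. transpose A *v y)" using snoc by simp
  moreover have "transpose A *v v \<in> range (\<lambda>y. transpose A *v y)" by blast
  ultimately have "X (\<omega> @ [i]) \<in> range (\<lambda>y. transpose A *v y)"
    unfolding v by (rule subspace_diff[OF subspace_range_transpose])
  moreover have "dual_gap f xh (X (\<omega> @ [i])) \<le> dual_gap f xh (X \<omega>)"
    using alg_step_le_line[OF feas st, of 0] by simp
  ultimately show ?case using snoc by auto
qed

theorem theorem4p5: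
  fixes A :: "real^'n^'m" and b :: "real^'m" and f :: "real^'n \<Rightarrow> real" and \<alpha> :: real
    and xh :: "real^'n" and r :: nat and I :: "nat \<Rightarrow> 'm set" and IC :: "nat set"
    and p :: "nat \<Rightarrow> real" and X :: "nat list \<Rightarrow> real^'n"
  assumes b_range: "b \<in> range (\<lambda>x. A *v x)"
    and sc: "strongly_convex \<alpha> f"
    and xh_feas: "A *v xh = b"
    and xh_min: "\<forall>x. A *v x = b \<longrightarrow> f xh \<le> f x"
    and calm: "calm (subdiff f) xh"
    and linreg: "lin_regular (subdiff f xh) (range (\<lambda>y. transpose A *v y))"
    and cover: "(\<Union>i\<in>{1..r}. I i) = UNIV"
    and IC_sub: "IC \<subseteq> {1..r}"
    and p_pos: "\<forall>i\<in>{1..r}. p i > 0"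
    and p_sum: "(\<Sum>i=1..r. p i) = 1"
    and X0: "X [] \<in> range (\<lambda>y. transpose A *v y)"
    and X_step: "\<forall>\<omega> i. set \<omega> \<subseteq> {1..r} \<longrightarrow> i \<in> {1..r} \<longrightarrow>
                    alg_step f A b I IC i (X \<omega>) (X (\<omega> @ [i]))"
  shows "\<exists>q c. 0 < q \<and> q < 1 \<and> c > 0 \<and>
           (\<forall>k. expect p r (Suc k) (\<lambda>\<omega>. bregman f (X \<omega>) (grad_conj f (X \<omega>)) xh)
                  \<le> q * expect p r k (\<lambda>\<omega>. bregman f (X \<omega>) (grad_conj f (X \<omega>)) xh)
              \<and> expect p r k (\<lambda>\<omega>. norm (grad_conj f (X \<omega>) - xh)) \<le> c * q powr (real k / 2))"
proof -
  \<comment> \<open>IC_sub is irrelevant too,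
    as the algorithm only tests whether the selected block lies in IC.\<close>
  let ?D = "\<lambda>\<omega>. dual_gap f xh (X \<omega>)"
  have a: "\<alpha> > 0" using sc by (rule strongly_convex_pos)
  have p: "\<forall>i\<in>{1..r}. 0 \<le> p i" using p_pos by auto
  obtain s0 where s0: "s0 \<in> subdiff f xh" using linreg unfolding lin_regular_def by blast
  have sx: "X \<omega> \<in> subdiff f (grad_conj f (X \<omega>))" for \<omega> by (rule subgradient_grad_conj[OF sc s0])
  obtain q where q: "0 < q" "q < 1" and contraction: "\<forall>s s'. s \<in> range (\<lambda>y. transpose A *v y) \<longrightarrow>
      dual_gap f xh s \<le> ?D [] \<longrightarrow> (\<forall>i\<in>{1..r}. alg_step f A b I IC i s (s' i)) \<longrightarrow>
      (\<Sum>i=1..r. p i * dual_gap f xh (s' i)) \<le> q * dual_gap f xh s"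
    using alg_step_expected_contraction[OF sc xh_feas calm linreg cover p_pos p_sum] by blast
  have step: "\<forall>\<omega>. set \<omega> \<subseteq> {1..r} \<longrightarrow> (\<Sum>i=1..r. p i * ?D (\<omega> @ [i])) \<le> q * ?D \<omega>"
  proof (intro allI impI)
    fix \<omega> :: "nat list" assume \<omega>: "set \<omega> \<subseteq> {1..r}"
    show "(\<Sum>i=1..r. p i * ?D (\<omega> @ [i])) \<le> q * ?D \<omega>"
      using contraction[rule_format, of "X \<omega>" "\<lambda>i. X (\<omega> @ [i])"]
        alg_iterates_invariant[OF xh_feas X0 X_step \<omega>] X_step \<omega> by blast
  qed
  have growth: "\<forall>\<omega>. \<alpha> / 2 * (norm (grad_conj f (X \<omega>) - xh))\<^sup>2 \<le> ?D \<omega>"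
    using dual_gap_ge[OF sc sx] by blast
  have "\<alpha> / 2 * (norm (grad_conj f (X []) - xh))\<^sup>2 \<ge> 0" using a by simp
  then have "?D [] \<ge> 0" using growth by (meson order_trans)
  then have "?D [] / \<alpha> \<ge> 0" using a by simp
  then have "?D [] / \<alpha> + 1/2 > 0" by linarith
  moreover have bregman: "bregman f (X \<omega>) (grad_conj f (X \<omega>)) xh = ?D \<omega>" for \<omega>
    using dual_gap_eq_bregman[OF sc sx] by simp
  moreover have "expect p r (Suc k) ?D \<le> q * expect p r k ?D" for k
    by (rule expect_Suc_le[OF p step])
  moreover have "expect p r k (\<lambda>\<omega>. norm (grad_conj f (X \<omega>) - xh)) \<le> (?D [] / \<alpha> + 1/2) * q powr (real k / 2)" for k
    using expect_le_powr_half[OF p p_sum a q(1) growth expect_le_geometric[OF p _ step]] q by simp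
  ultimately show ?thesis unfolding bregman using q by blast
qed

end
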